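(* Let $X$ have the $\Gamma(\alpha,1)$ distribution (density $x^{\alpha-1}e^{-x}/(\alpha-1)!$, $x\geq0$) with integer shape parameter $\alpha\geq 2$. For every integer $s\geq 2$, the tail of the $s$-iterated distribution induced by $X$ is $$\overline{T}_{X,s}(x)=e^{-x}+\frac{e^{-x}}{\binom{\alpha+s-2}{\alpha-1}}\sum_{\ell=1}^{\alpha-1}\binom{s+\alpha-\ell-2}{\alpha-\ell-1}\frac{x^\ell}{\ell!},\qquad x\geq 0.$$
   Context: For a nonnegative absolutely continuous random variable $X$ with density $f_X$, set $\overline{T}_{X,0}=f_X$, $\mu_{X,0}=1$, and for integers $s\geq 1$ define recursively $\overline{T}_{X,s}(x)=\frac{1}{\mu_{X,s-1}}\int_x^\infty\overline{T}_{X,s-1}(t)\,dt$ and $\mu_{X,s}=\int_0^\infty\overline{T}_{X,s}(t)\,dt$. $\overline{T}_{X,s}$ is the tail (survival function) of the $s$-iterated distribution induced by $X$. *)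

theory Defs
  imports "HOL-Analysis.Analysis"
begin

primrec iter_tail :: "(real \<Rightarrow> real) \<Rightarrow> nat \<Rightarrow> real \<Rightarrow> real" where
  "iter_tail f 0 = f"
| "iter_tail f (Suc s) =
     (\<lambda>x. integral {x..} (iter_tail f s) /
           (if s = 0 then 1 else integral {0..} (iter_tail f s)))"

definition iter_mu :: "(real \<Rightarrow> real) \<Rightarrow> nat \<Rightarrow> real" where
  "iter_mu f s = (if s = 0 then 1 else integral {0..} (iter_tail f s))"

lemma iter_tail_Suc: "iter_tail f (Suc s) x = integral {x..} (iter_tail f s) / iter_mu f s"
  by (simp add: iter_mu_def)

definition gamma_density :: "nat \<Rightarrow> real \<Rightarrow> real" where
  "gamma_density \<alpha> x = (if x \<ge> 0 then x ^ (\<alpha> - 1) * exp (- x) / fact (\<alpha> - 1) else 0)"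

end

theory Submission
  imports Defs
begin

text \<open>On [0, \<infinity>) every iterated tail of the Gamma density has the form
  e^-x * \<Sum>j c_j x^j / j!. Since the integral of e^-t t^j / j! over [x, \<infinity>) is
  e^-x * \<Sum>(i \<le> j) x^i / i!, one more integration replaces the coefficients c_i by their suffix
  sums \<Sum>(j \<ge> i) c_j, and the normalising mean is the value at 0. Starting from the density
  itself (c_j = [j = \<alpha> - 1]), the hockey-stick identity shows that the s-th tail has
  c_j = C(s - 1 + \<alpha> - 1 - j, \<alpha> - 1 - j).\<close>

lemma has_real_derivative_exp_minus_partial_exp:
  "((\<lambda>t::real. - exp (-t) * (\<Sum>i\<le>j. t ^ i / fact i)) has_real_derivative exp (-t) * t ^ j / fact j)
     (at t)"
proof (induction j)
  case 0
  show ?case by (auto intro!: derivative_eq_intros)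
next
  case (Suc j)
  have "((\<lambda>t::real. - exp (-t)) has_real_derivative exp (-t)) (at t)"
    by (auto intro!: derivative_eq_intros)
  moreover have "((\<lambda>t::real. t ^ Suc j / fact (Suc j)) has_real_derivative t ^ j / fact j) (at t)"
    using DERIV_pow[of "Suc j" t] DERIV_cdivide[where c="fact (Suc j)"] by (force simp: divide_simps)
  ultimately have "((\<lambda>t. - exp (-t) * (t ^ Suc j / fact (Suc j))) has_real_derivative
      exp (-t) * (t ^ Suc j / fact (Suc j)) + t ^ j / fact j * - exp (-t)) (at t)"
    by (rule DERIV_mult)
  from DERIV_add[OF Suc.IH this] show ?case
    by (simp add: algebra_simps)
qed

lemma tendsto_exp_minus_partial_exp:
  "((\<lambda>y::real. exp (-y) * (\<Sum>i\<le>j. y ^ i / fact i)) \<longlongrightarrow> 0) at_top"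
proof -
  have "((\<lambda>y::real. \<Sum>i\<le>j. y ^ i / exp y / fact i) \<longlongrightarrow> 0) at_top"
    by (intro tendsto_null_sum tendsto_divide_zero tendsto_power_div_exp_0)
  moreover have "(\<Sum>i\<le>j. y ^ i / exp y / fact i) = exp (-y) * (\<Sum>i\<le>j. y ^ i / fact i)" for y :: real
    by (simp add: sum_distrib_left exp_minus field_simps)
  ultimately show ?thesis by simp
qed

lemma has_integral_exp_power_atLeast:
  fixes x :: real
  assumes "0 \<le> x"
  shows "((\<lambda>t. exp (-t) * t ^ j / fact j) has_integral exp (-x) * (\<Sum>i\<le>j. x ^ i / fact i)) {x..}"
proof (rule has_integral_to_inf)
  define F where "F y = - exp (-y) * (\<Sum>i\<le>j. y ^ i / fact i)" for y :: real
  show "(\<lambda>t. exp (-t) * t ^ j / fact j) integrable_on {x..y}" for y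
    by (intro integrable_continuous_interval continuous_intros) auto
  show "0 \<le> exp (-y) * y ^ j / fact j" if "x \<le> y" for y
    using that assms by simp
  have F_integral: "((\<lambda>t. exp (-t) * t ^ j / fact j) has_integral F y - F x) {x..y}"
    if "x \<le> y" for y
    using that
  proof (intro fundamental_theorem_of_calculus)
    show "(F has_vector_derivative exp (-t) * t ^ j / fact j) (at t within {x..y})" for t
      using has_real_derivative_exp_minus_partial_exp[of j t]
      unfolding F_def has_real_derivative_iff_has_vector_derivative[symmetric]
      by (rule DERIV_subset) simp
  qed
  have "\<forall>\<^sub>F y in at_top. integral {x..y} (\<lambda>t. exp (-t) * t ^ j / fact j) = F y - F x"
    by (rule eventually_mono[OF eventually_ge_at_top[of x]]) (rule integral_unique[OF F_integral])
  moreover have "((\<lambda>y. F y - F x) \<longlongrightarrow> - 0 - F x) at_top"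
    unfolding F_def using tendsto_exp_minus_partial_exp[of j]
    by (intro tendsto_intros) (simp add: tendsto_minus_cancel_left[symmetric])
  ultimately show "((\<lambda>y. integral {x..y} (\<lambda>t. exp (-t) * t ^ j / fact j))
      \<longlongrightarrow> exp (-x) * (\<Sum>i\<le>j. x ^ i / fact i)) at_top"
    by (simp add: F_def tendsto_cong)
qed

lemma sum_atMost_nested_swap:
  fixes c g :: "nat \<Rightarrow> 'a::comm_semiring_0"
  shows "(\<Sum>j\<le>n. c j * (\<Sum>i\<le>j. g i)) = (\<Sum>i\<le>n. (\<Sum>j=i..n. c j) * g i)"
proof -
  have "(\<Sum>j\<le>n. c j * (\<Sum>i\<le>j. g i)) = (\<Sum>j\<le>n. \<Sum>i\<in>{i\<in>{..n}. i \<le> j}. c j * g i)"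
    by (intro sum.cong) (auto simp: sum_distrib_left intro!: sum.cong)
  also have "\<dots> = (\<Sum>i\<le>n. \<Sum>j\<in>{j\<in>{..n}. i \<le> j}. c j * g i)"
    by (rule sum.swap_restrict) auto
  also have "\<dots> = (\<Sum>i\<le>n. (\<Sum>j=i..n. c j) * g i)"
    by (intro sum.cong) (auto simp: sum_distrib_right intro!: sum.cong)
  finally show ?thesis .
qed

lemma has_integral_exp_poly_atLeast:
  fixes x :: real
  assumes "0 \<le> x"
  shows "((\<lambda>t. exp (-t) * (\<Sum>j\<le>n. a j * t ^ j / fact j)) has_integral
           exp (-x) * (\<Sum>i\<le>n. (\<Sum>j=i..n. a j) * x ^ i / fact i)) {x..}"
proof -
  have "((\<lambda>t. \<Sum>j\<le>n. a j * (exp (-t) * t ^ j / fact j)) has_integral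
           (\<Sum>j\<le>n. a j * (exp (-x) * (\<Sum>i\<le>j. x ^ i / fact i)))) {x..}"
    by (intro has_integral_sum has_integral_mult_right has_integral_exp_power_atLeast assms) auto
  moreover have "(\<lambda>t. \<Sum>j\<le>n. a j * (exp (-t) * t ^ j / fact j)) =
      (\<lambda>t. exp (-t) * (\<Sum>j\<le>n. a j * t ^ j / fact j))"
    by (simp add: sum_distrib_left mult.left_commute)
  moreover have "(\<Sum>j\<le>n. a j * (exp (-x) * (\<Sum>i\<le>j. x ^ i / fact i))) =
      exp (-x) * (\<Sum>j\<le>n. a j * (\<Sum>i\<le>j. x ^ i / fact i))"
    by (simp add: sum_distrib_left mult.left_commute)
  ultimately show ?thesis
    by (simp add: sum_atMost_nested_swap)
qed

text \<open>Coefficient of x^j/j! in the (m+1)-th tail of the Gamma(n+1) density, up to normalisation.\<close>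
definition iter_gamma_coeff :: "nat \<Rightarrow> nat \<Rightarrow> nat \<Rightarrow> nat" where
  "iter_gamma_coeff n m j = (m + (n - j)) choose (n - j)"

lemma iter_gamma_coeff_pos: "0 < iter_gamma_coeff n m j"
  by (simp add: iter_gamma_coeff_def)

lemma sum_iter_gamma_coeff:
  assumes "i \<le> n"
  shows "(\<Sum>j=i..n. iter_gamma_coeff n m j) = iter_gamma_coeff n (Suc m) i"
proof -
  have "(\<Sum>j=i..n. iter_gamma_coeff n m j) = (\<Sum>k\<le>n - i. (m + k) choose k)"
    by (rule sum.reindex_bij_witness[where i="\<lambda>k. n - k" and j="\<lambda>j. n - j"])
       (use assms in \<open>auto simp: iter_gamma_coeff_def\<close>)
  also have "\<dots> = iter_gamma_coeff n (Suc m) i"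
    by (simp add: sum_choose_lower iter_gamma_coeff_def)
  finally show ?thesis .
qed

lemma has_integral_iter_gamma_poly:
  fixes x :: real
  assumes "0 \<le> x"
  shows "((\<lambda>t. exp (-t) * (\<Sum>j\<le>n. real (iter_gamma_coeff n m j) * t ^ j / fact j)) has_integral
           exp (-x) * (\<Sum>i\<le>n. real (iter_gamma_coeff n (Suc m) i) * x ^ i / fact i)) {x..}"
proof -
  have coeffs: "(\<Sum>i\<le>n. (\<Sum>j=i..n. real (iter_gamma_coeff n m j)) * x ^ i / fact i) =
      (\<Sum>i\<le>n. real (iter_gamma_coeff n (Suc m) i) * x ^ i / fact i)"
    by (intro sum.cong refl) (simp add: sum_iter_gamma_coeff flip: of_nat_sum)
  from has_integral_exp_poly_atLeast[OF assms, where a="\<lambda>j. real (iter_gamma_coeff n m j)" and n=n]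
  show ?thesis
    unfolding coeffs .
qed

lemma iter_tail_gamma_density:
  fixes x :: real
  assumes "0 \<le> x"
  shows "iter_tail (gamma_density (Suc n)) (Suc m) x =
           exp (-x) * (\<Sum>j\<le>n. real (iter_gamma_coeff n m j) * x ^ j / fact j) /
           real (iter_gamma_coeff n m 0)"
  using assms
proof (induction m arbitrary: x)
  case 0
  have "integral {x..} (gamma_density (Suc n)) = integral {x..} (\<lambda>t. exp (-t) * t ^ n / fact n)"
    using 0 by (intro integral_cong) (auto simp: gamma_density_def)
  also have "\<dots> = exp (-x) * (\<Sum>i\<le>n. x ^ i / fact i)"
    using has_integral_exp_power_atLeast[OF 0] by (rule integral_unique)
  finally show ?case by (simp add: iter_gamma_coeff_def)
next
  case (Suc m)
  define P where "P k t = exp (-t) * (\<Sum>j\<le>n. real (iter_gamma_coeff n k j) * t ^ j / fact j)"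
    for k and t :: real
  define c where "c k = real (iter_gamma_coeff n k 0)" for k
  have c_pos: "0 < c k" for k
    by (simp add: c_def iter_gamma_coeff_pos)
  have integral_tail: "integral {y..} (iter_tail (gamma_density (Suc n)) (Suc m)) = P (Suc m) y / c m"
    if "0 \<le> y" for y :: real
  proof -
    have "integral {y..} (iter_tail (gamma_density (Suc n)) (Suc m)) = integral {y..} (\<lambda>t. P m t / c m)"
      using that by (intro integral_cong) (simp add: Suc.IH P_def c_def del: iter_tail.simps)
    also have "\<dots> = integral {y..} (P m) / c m"
      by simp
    also have "integral {y..} (P m) = P (Suc m) y"
      using has_integral_iter_gamma_poly[OF that] unfolding P_def by (rule integral_unique)
    finally show ?thesis .
  qed
  have "iter_tail (gamma_density (Suc n)) (Suc (Suc m)) x =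
      integral {x..} (iter_tail (gamma_density (Suc n)) (Suc m)) /
      integral {0..} (iter_tail (gamma_density (Suc n)) (Suc m))"
    by (simp only: iter_tail_Suc iter_mu_def) simp
  also have "\<dots> = (P (Suc m) x / c m) / (P (Suc m) 0 / c m)"
    using Suc.prems by (simp only: integral_tail order_refl)
  also have "P (Suc m) 0 = c (Suc m)"
    by (simp add: P_def c_def sum.atMost_shift)
  finally show ?case
    using c_pos[of m] by (simp add: P_def c_def)
qed

theorem theorem3:
  fixes \<alpha> s :: nat and x :: real
  assumes "\<alpha> \<ge> 2" and "s \<ge> 2" and "x \<ge> 0"
  shows "iter_tail (gamma_density \<alpha>) s x =
           exp (- x) + exp (- x) / real ((\<alpha> + s - 2) choose (\<alpha> - 1)) *
             (\<Sum>l = 1..\<alpha> - 1. real ((s + \<alpha> - l - 2) choose (\<alpha> - l - 1)) * x ^ l / fact l)"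
proof -
  obtain n where n: "\<alpha> = Suc n" using assms(1) by (cases \<alpha>) auto
  obtain m where m: "s = Suc m" using assms(2) by (cases s) auto
  define c where "c j = real (iter_gamma_coeff n m j)" for j
  have c0: "real ((\<alpha> + s - 2) choose (\<alpha> - 1)) = c 0"
    by (simp add: n m c_def iter_gamma_coeff_def add.commute)
  have coeffs: "(\<Sum>l = 1..\<alpha> - 1. real ((s + \<alpha> - l - 2) choose (\<alpha> - l - 1)) * x ^ l / fact l) =
      (\<Sum>l = 1..n. c l * x ^ l / fact l)"
    by (intro sum.cong) (auto simp: n m c_def iter_gamma_coeff_def)
  have "iter_tail (gamma_density \<alpha>) s x = exp (-x) * (\<Sum>j\<le>n. c j * x ^ j / fact j) / c 0"
    using iter_tail_gamma_density[OF assms(3)] by (simp add: n m c_def)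
  also have "(\<Sum>j\<le>n. c j * x ^ j / fact j) = c 0 + (\<Sum>l = 1..n. c l * x ^ l / fact l)"
    by (simp add: atMost_atLeast0 sum.atLeast_Suc_atMost)
  also have "exp (-x) * (c 0 + (\<Sum>l = 1..n. c l * x ^ l / fact l)) / c 0 =
      exp (-x) + exp (-x) / c 0 * (\<Sum>l = 1..n. c l * x ^ l / fact l)"
    using iter_gamma_coeff_pos[of n m 0] by (simp add: c_def field_simps)
  finally show ?thesis
    by (simp only: c0 coeffs)
qed

end
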